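(* Let $N\ge 2$, and let $f,g,\lambda,\Omega,u$ be as follows: $f:[0,+\infty)^2\to\mathbb{R}$ bounded measurable, $v\mapsto f(r,v)$ continuous uniformly in $r$, $r\mapsto f(r,v)$ nonincreasing; $g\in C([0,+\infty))\cap C^1((0,+\infty))$, $g(0)=0$, $g'>0$ on $(0,+\infty)$; $\lambda\in C([0,+\infty))$ positive and nondecreasing; $\Omega\subset\mathbb{R}^N$ a bounded domain; $u\in C^1(\Omega)\cap C(\overline\Omega)$ a weak solution of $-\nabla\cdot(g(|\nabla u|)\nabla u/|\nabla u|)=f(|x|,u)$, $u>0$ in $\Omega$, $u=0$ on $\partial\Omega$, such that for every $\varepsilon>0$ there is an open $U\supset\partial\Omega$ with $||\nabla u(x)|-\lambda(|x|)|<\varepsilon$ on $U\cap\Omega$. Extend $u$ by zero outside $\Omega$, let $L$ be its Lipschitz constant on $\mathbb{R}^N$, fix $R>0$ with $\overline\Omega\subset B_R$, and set $k:=2RL$. Let $u^t$ be the continuous Steiner symmetrization of $u$ with respect to $x_1$, and for $t\in(0,+\infty)$ let $M_1(t):=\{x:0<u(x)\le kt\}$ and $M_2(t):=\Omega\cap\{x:0<u^t(x)\le kt\}$. With $d(x):=\operatorname{dist}(x,\partial\Omega)$, we have $$\lim_{t\to 0}\sup\{d(x): x\in M_1(t)\cup M_2(t)\}=0.$$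
   Context: Weak solution: $\int_\Omega g(|\nabla u|)\frac{\nabla u\cdot\nabla v}{|\nabla u|}dx=\int_\Omega f(|x|,u)v\,dx$ for all $v\in W_0^{1,1}(\Omega)\cap W^{1,\infty}(\Omega)$ (with $g(|y|)y/|y|:=0$ for $y=0$). The zero extension of $u$ is Lipschitz continuous on $\mathbb{R}^N$ (as asserted in the paper). Continuous Steiner symmetrization (CStS): on the family of measurable subsets of $\mathbb{R}$ of finite measure there is a unique family of maps $E_t$, $0\le t\le+\infty$, such that (i) $\mathscr{L}^1(E_t(M))=\mathscr{L}^1(M)$; (ii) $M\subset N$ implies $E_t(M)\subset E_t(N)$; (iii) $E_t(E_s(M))=E_{s+t}(M)$; (iv) $E_t([x-R,x+R])=[xe^{-t}-R,xe^{-t}+R]$. For $M\subset\mathbb{R}^N$ measurable of finite measure, with $x=(x_1,x')$ and $M(x')=\{x_1:(x_1,x')\in M\}$, set $E_t(M)=\{(x_1,x'):x_1\in E_t(M(x'))\}$. For nonnegative measurable $u$ with $\mathscr{L}^N(\{u>c\})<\infty$ for all $c>0$, $u^t(x)=\sup\{c>0:x\in E_t(\{u>c\})\}$ if $x\in\bigcup_{c>0}E_t(\{u>c\})$, and $0$ otherwise; for continuous $u$, $u^t$ denotes its unique continuous representative (using the open precise representatives of $E_t(\{u>c\})$). The supremum over an empty set is taken as $0$. *)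

theory Defs
  imports "HOL-Analysis.Analysis"
begin

text \<open>Points of R^N (N = DIM('a) + 1 \<ge> 2) are pairs (x1, x') :: real \<times> 'a,
  with the Euclidean norm and inner product of the product space.\<close>

definition fin_meas_set :: "real set \<Rightarrow> bool" where
  "fin_meas_set M \<longleftrightarrow> M \<in> sets lebesgue \<and> emeasure lebesgue M < \<infinity>"

text \<open>A family of maps E t (t \<ge> 0) on measurable subsets of R of finite measure
  satisfying the characterising properties (i)-(iv) of continuous Steiner
  symmetrization.\<close>
definition cst_family :: "(real \<Rightarrow> real set \<Rightarrow> real set) \<Rightarrow> bool" where
  "cst_family E \<longleftrightarrow>
     (\<forall>t\<ge>0. \<forall>M. fin_meas_set M \<longrightarrow>
        E t M \<in> sets lebesgue \<and> emeasure lebesgue (E t M) = emeasure lebesgue M) \<and>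
     (\<forall>t\<ge>0. \<forall>M N. fin_meas_set M \<and> fin_meas_set N \<and> M \<subseteq> N \<longrightarrow> E t M \<subseteq> E t N) \<and>
     (\<forall>s\<ge>0. \<forall>t\<ge>0. \<forall>M. fin_meas_set M \<longrightarrow> E t (E s M) = E (s + t) M) \<and>
     (\<forall>t\<ge>0. \<forall>x. \<forall>R>0. E t {x - R .. x + R} = {x * exp (- t) - R .. x * exp (- t) + R})"

definition cst_set :: "(real \<Rightarrow> real set \<Rightarrow> real set) \<Rightarrow> real \<Rightarrow> (real \<times> 'a) set \<Rightarrow> (real \<times> 'a) set" where
  "cst_set E t M = {(x1, x'). x1 \<in> E t {y. (y, x') \<in> M}}"

definition cst_fun :: "(real \<Rightarrow> real set \<Rightarrow> real set) \<Rightarrow> real \<Rightarrow> (real \<times> 'a \<Rightarrow> real) \<Rightarrow> real \<times> 'a \<Rightarrow> real" where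
  "cst_fun E t u x =
     (if x \<in> (\<Union>c\<in>{0<..}. cst_set E t {y. u y > c})
      then Sup {c. c > 0 \<and> x \<in> cst_set E t {y. u y > c}} else 0)"

text \<open>Weak solution of -div(g(|Du|) Du/|Du|) = f(|x|,u) in \<Omega>, where Gu is the
  (classical) gradient of u; tested with C^1 functions compactly supported in \<Omega>.\<close>
definition weak_solution ::
  "('a::euclidean_space) set \<Rightarrow> (real \<Rightarrow> real) \<Rightarrow> (real \<Rightarrow> real \<Rightarrow> real) \<Rightarrow> ('a \<Rightarrow> real) \<Rightarrow> ('a \<Rightarrow> 'a) \<Rightarrow> bool" where
  "weak_solution \<Omega> g f u Gu \<longleftrightarrow>
     (\<forall>v Gv. (\<forall>x\<in>\<Omega>. (v has_derivative (\<lambda>h. Gv x \<bullet> h)) (at x)) \<and> continuous_on \<Omega> Gv \<and>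
        (\<exists>K. compact K \<and> K \<subseteq> \<Omega> \<and> (\<forall>x\<in>\<Omega> - K. v x = 0))
      \<longrightarrow> integral \<Omega> (\<lambda>x. (if Gu x = 0 then 0 else g (norm (Gu x)) / norm (Gu x)) * (Gu x \<bullet> Gv x))
          = integral \<Omega> (\<lambda>x. f (norm x) (u x) * v x))"

end

theory Submission
  imports Defs
begin

text \<open>Continuous Steiner symmetrization moves each point of B_R by at most
  R(1 - e^{-t}) \<le> Rt in the x_1-direction, so by the Lipschitz bound u^t \<ge> u - LRt.
  Hence M_1(t) \<union> M_2(t) lies in {x \<in> \<Omega>. u x \<le> 3RLt}; this set is nonempty because u
  vanishes on \<partial>\<Omega>, and since u is continuous and positive on \<Omega> it shrinks towards \<partial>\<Omega>
  as t \<rightarrow> 0.\<close>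

lemma fin_meas_set_Icc: "fin_meas_set {a..b}"
  unfolding fin_meas_set_def by (simp add: emeasure_lborel_Icc_eq)

lemma fin_meas_set_lmeasurable: "M \<in> lmeasurable \<Longrightarrow> fin_meas_set M"
  unfolding fin_meas_set_def fmeasurable_def by auto

lemma cst_family_mono:
  assumes "cst_family E" "0 \<le> t" "fin_meas_set M" "fin_meas_set N" "M \<subseteq> N"
  shows "E t M \<subseteq> E t N"
  using assms unfolding cst_family_def by blast

lemma cst_family_Icc:
  assumes "cst_family E" "0 \<le> t" "0 < r"
  shows "E t {a - r .. a + r} = {a * exp (- t) - r .. a * exp (- t) + r}"
  using assms unfolding cst_family_def by blast

lemma cst_family_empty:
  assumes E: "cst_family E" and t: "0 \<le> t"
  shows "E t {} = {}"
proof (rule ccontr)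
  assume "E t {} \<noteq> {}"
  then obtain a where a: "a \<in> E t {}" by auto
  \<comment> \<open>E_t {} lies in the image of every interval, in particular of one mapped away from a.\<close>
  define c where "c = (a + 3) * exp t"
  have "E t {} \<subseteq> E t {c - 1 .. c + 1}"
    using cst_family_mono[OF E t] fin_meas_set_Icc by (simp add: fin_meas_set_def)
  also have "\<dots> = {a + 3 - 1 .. a + 3 + 1}"
    using cst_family_Icc[OF E t, of 1 c] unfolding c_def mult.assoc exp_minus_inverse by simp
  finally show False using a by auto
qed

lemma cst_family_Icc_subset:
  assumes E: "cst_family E" and t: "0 \<le> t" and r: "0 < r"
    and M: "fin_meas_set M" "{a - r .. a + r} \<subseteq> M"
  shows "{a * exp (- t) - r .. a * exp (- t) + r} \<subseteq> E t M"
  using cst_family_mono[OF E t fin_meas_set_Icc M(1) M(2)] cst_family_Icc[OF E t r] by simp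

lemma cst_fun_ge:
  assumes "bdd_above {c. 0 < c \<and> x \<in> cst_set E t {y. c < u y}}"
    and "0 < c" "x \<in> cst_set E t {y. c < u y}"
  shows "c \<le> cst_fun E t u x"
  using assms unfolding cst_fun_def by (auto intro: cSup_upper)

lemma cst_fun_nonneg:
  assumes "bdd_above {c. 0 < c \<and> x \<in> cst_set E t {y. c < u y}}"
  shows "0 \<le> cst_fun E t u x"
proof (cases "x \<in> (\<Union>c\<in>{0<..}. cst_set E t {y. c < u y})")
  case True
  then obtain c where "0 < c" "x \<in> cst_set E t {y. c < u y}" by auto
  thus ?thesis using cst_fun_ge[OF assms] by force
qed (simp add: cst_fun_def)

lemma cst_levels_bdd_above:
  fixes u :: "real \<times> 'a \<Rightarrow> real"
  assumes E: "cst_family E" and t: "0 \<le> t" and B: "\<forall>y. u y \<le> B"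
  shows "bdd_above {c. 0 < c \<and> x \<in> cst_set E t {y. c < u y}}"
proof (rule bdd_aboveI)
  fix c assume c: "c \<in> {c. 0 < c \<and> x \<in> cst_set E t {y. c < u y}}"
  show "c \<le> B"
  proof (rule ccontr)
    assume "\<not> c \<le> B"
    hence "\<not> c < u y" for y using B[rule_format, of y] by linarith
    hence "{y. c < u y} = {}" by simp
    thus False using c cst_family_empty[OF E t] by (auto simp: cst_set_def)
  qed
qed

lemma fin_meas_set_superlevel_slice:
  fixes u :: "real \<times> 'a::euclidean_space \<Rightarrow> real"
  assumes u: "continuous_on UNIV u" and supp: "\<forall>x. u x \<noteq> 0 \<longrightarrow> norm x < R" and c: "0 \<le> c"
  shows "fin_meas_set {y. c < u (y, x')}"
proof (intro fin_meas_set_lmeasurable lmeasurable_open)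
  show "open {y. c < u (y, x')}"
    by (intro open_Collect_less continuous_on_compose2[OF u] continuous_intros) auto
  have "{y. c < u (y, x')} \<subseteq> cball 0 R"
  proof
    fix y assume "y \<in> {y. c < u (y, x')}"
    hence "norm (y, x') < R" using supp c by force
    thus "y \<in> cball 0 R" using norm_fst_le[of y x'] by simp
  qed
  thus "bounded {y. c < u (y, x')}" using bounded_subset by blast
qed

lemma bounded_support_bdd_above:
  fixes u :: "'b::euclidean_space \<Rightarrow> real"
  assumes u: "continuous_on UNIV u" and supp: "\<forall>x. u x \<noteq> 0 \<longrightarrow> norm x < R"
  obtains B where "\<forall>y. u y \<le> B"
proof -
  have "bounded (u ` cball 0 R)"
    by (intro compact_imp_bounded compact_continuous_image continuous_on_subset[OF u]) auto
  then obtain B where B: "\<forall>y\<in>cball 0 R. \<bar>u y\<bar> \<le> B" by (auto simp: bounded_real)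
  have "u y \<le> max B 0" for y
  proof (cases "u y = 0")
    case False
    hence "y \<in> cball 0 R" using supp by (meson less_imp_le mem_cball_0)
    hence "\<bar>u y\<bar> \<le> B" using B by blast
    thus ?thesis by linarith
  qed simp
  thus ?thesis using that by blast
qed

text \<open>The interval of radius R(1 - e^{-t}) around x_1 lies in the slice of {u > c}, and E_t
  maps it to the interval of the same radius around x_1 e^{-t}, which still contains x_1.\<close>
lemma mem_cst_set_superlevel:
  fixes u :: "real \<times> 'a::euclidean_space \<Rightarrow> real"
  assumes E: "cst_family E" and t: "0 < t" and R: "0 < R"
    and lip: "lipschitz_on L UNIV u" and supp: "\<forall>x. u x \<noteq> 0 \<longrightarrow> norm x < R"
    and x: "norm x < R" and c: "0 < c" "c < u x - L * R * (1 - exp (- t))"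
  shows "x \<in> cst_set E t {y. c < u y}"
proof -
  obtain x1 x' where x12: "x = (x1, x')" by (cases x)
  define r where "r = R * (1 - exp (- t))"
  have L: "0 \<le> L" and Ld: "\<And>a b. dist (u a) (u b) \<le> L * dist a b"
    using lip unfolding lipschitz_on_def by auto
  have r: "0 < r" unfolding r_def using R t by simp
  have "\<bar>x1\<bar> < R" using x norm_fst_le[of x1 x'] x12 by simp
  have "0 \<le> 1 - exp (- t)" using t by simp
  moreover have "x1 - x1 * exp (- t) = x1 * (1 - exp (- t))" by (simp add: right_diff_distrib)
  ultimately have "\<bar>x1 - x1 * exp (- t)\<bar> = \<bar>x1\<bar> * (1 - exp (- t))"
    by (simp only: abs_mult abs_of_nonneg)
  also have "\<dots> \<le> r"
    unfolding r_def using \<open>\<bar>x1\<bar> < R\<close> \<open>0 \<le> 1 - exp (- t)\<close> by (intro mult_right_mono) auto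
  finally have x1: "x1 \<in> {x1 * exp (- t) - r .. x1 * exp (- t) + r}" by (auto simp: abs_le_iff)
  have sub: "{x1 - r .. x1 + r} \<subseteq> {y. c < u (y, x')}"
  proof
    fix y assume "y \<in> {x1 - r .. x1 + r}"
    hence "dist (y, x') x \<le> r" using x12 by (simp add: dist_Pair_Pair dist_real_def abs_le_iff)
    have "dist (u (y, x')) (u x) \<le> L * dist (y, x') x" by (rule Ld)
    also have "\<dots> \<le> L * r" using \<open>dist (y, x') x \<le> r\<close> L by (rule mult_left_mono)
    finally show "y \<in> {y. c < u (y, x')}" using c by (auto simp: dist_real_def r_def mult.assoc)
  qed
  have "fin_meas_set {y. c < u (y, x')}"
    using fin_meas_set_superlevel_slice[OF lipschitz_on_continuous_on[OF lip] supp] c by simp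
  hence "x1 \<in> E t {y. c < u (y, x')}"
    using subsetD[OF cst_family_Icc_subset[OF E less_imp_le[OF t] r _ sub] x1] by blast
  thus ?thesis using x12 by (simp add: cst_set_def)
qed

lemma cst_fun_lower_bound:
  fixes u :: "real \<times> 'a::euclidean_space \<Rightarrow> real"
  assumes E: "cst_family E" and t: "0 < t" and R: "0 < R"
    and lip: "lipschitz_on L UNIV u" and supp: "\<forall>x. u x \<noteq> 0 \<longrightarrow> norm x < R"
  shows "u x - L * R * (1 - exp (- t)) \<le> cst_fun E t u x"
proof -
  obtain B where "\<forall>y. u y \<le> B"
    using bounded_support_bdd_above[OF lipschitz_on_continuous_on[OF lip] supp] by blast
  hence bdd: "bdd_above {c. 0 < c \<and> x \<in> cst_set E t {y. c < u y}}"
    by (rule cst_levels_bdd_above[OF E less_imp_le[OF t]])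
  let ?a = "u x - L * R * (1 - exp (- t))"
  show ?thesis
  proof (cases "norm x < R \<and> 0 < ?a")
    case False
    have "0 \<le> L * R * (1 - exp (- t))" using lip R t by (simp add: lipschitz_on_def)
    hence "?a \<le> 0" using False supp by (cases "u x = 0") auto
    thus ?thesis using cst_fun_nonneg[OF bdd] by linarith
  next
    case True
    show ?thesis
    proof (rule dense_le_bounded[of 0])
      fix c assume "0 < c" "c < ?a"
      thus "c \<le> cst_fun E t u x"
        using cst_fun_ge[OF bdd] mem_cst_set_superlevel[OF E t R lip supp] True by blast
    qed (use True in simp)
  qed
qed

lemma continuous_ge_on_open_if_AE_eq:
  fixes f g h :: "'b::euclidean_space \<Rightarrow> real"
  assumes V: "open V" and f: "continuous_on V f" and h: "continuous_on V h"
    and ae: "AE x in lebesgue. f x = g x" and ge: "\<forall>x\<in>V. h x \<le> g x" and x: "x \<in> V"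
  shows "h x \<le> f x"
proof -
  let ?W = "V \<inter> (\<lambda>y. h y - f y) -` {0<..}"
  have "open ?W"
    by (intro continuous_open_preimage continuous_on_diff h f V open_greaterThan)
  moreover have "?W \<in> null_sets lebesgue"
  proof -
    obtain N where N: "N \<in> null_sets lebesgue" "{y \<in> space lebesgue. \<not> f y = g y} \<subseteq> N"
      using ae unfolding eventually_ae_filter by auto
    have "?W \<subseteq> N"
    proof
      fix y assume "y \<in> ?W"
      hence "f y \<noteq> g y" using ge by fastforce
      thus "y \<in> N" using N(2) by auto
    qed
    thus ?thesis using N(1) null_sets_completion_subset by blast
  qed
  ultimately have "?W = {}"
    using open_not_negligible by (auto simp: negligible_iff_null_sets)
  thus ?thesis using x by (auto simp: not_less)
qed

lemma small_values_near_frontier: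
  fixes u :: "'b::euclidean_space \<Rightarrow> real"
  assumes \<Omega>: "bounded \<Omega>" and u: "continuous_on (closure \<Omega>) u" and pos: "\<forall>x\<in>\<Omega>. 0 < u x"
    and e: "0 < e"
  obtains m where "0 < m" "\<forall>z\<in>\<Omega>. u z < m \<longrightarrow> infdist z (frontier \<Omega>) < e"
proof -
  define K where "K = closure \<Omega> \<inter> {x. e \<le> infdist x (frontier \<Omega>)}"
  have K\<Omega>: "K \<subseteq> \<Omega>"
  proof
    fix x assume x: "x \<in> K"
    show "x \<in> \<Omega>"
    proof (rule ccontr)
      assume "x \<notin> \<Omega>"
      hence "x \<in> frontier \<Omega>" using x interior_subset by (auto simp: K_def frontier_def)
      thus False using x e by (simp add: K_def)
    qed
  qed
  have "closed {x. e \<le> infdist x (frontier \<Omega>)}"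
    by (intro closed_Collect_le continuous_intros continuous_on_infdist)
  hence K: "compact K"
    unfolding K_def using \<Omega> by (simp add: compact_eq_bounded_closed closed_Int bounded_Int bounded_closure)
  show ?thesis
  proof (cases "K = {}")
    case True
    have "infdist z (frontier \<Omega>) < e" if "z \<in> \<Omega>" for z
    proof -
      have "z \<in> closure \<Omega>" "z \<notin> K" using that closure_subset True by auto
      thus ?thesis by (simp add: K_def not_le)
    qed
    thus ?thesis using that[of 1] by simp
  next
    case False
    obtain z0 where z0: "z0 \<in> K" "\<forall>y\<in>K. u z0 \<le> u y"
      using continuous_attains_inf[OF K False continuous_on_subset[OF u]] K_def by blast
    show ?thesis
    proof (rule that[of "u z0"])
      show "0 < u z0" using z0(1) K\<Omega> pos by auto
      show "\<forall>z\<in>\<Omega>. u z < u z0 \<longrightarrow> infdist z (frontier \<Omega>) < e"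
      proof (intro ballI impI)
        fix z assume "z \<in> \<Omega>" "u z < u z0"
        hence "z \<notin> K" using z0(2) by force
        thus "infdist z (frontier \<Omega>) < e" using \<open>z \<in> \<Omega>\<close> closure_subset by (auto simp: K_def)
      qed
    qed
  qed
qed

lemma Sup_infdist_frontier_tendsto_0:
  fixes u :: "'b::euclidean_space \<Rightarrow> real"
  assumes \<Omega>: "bounded \<Omega>" and u: "continuous_on (closure \<Omega>) u" and pos: "\<forall>x\<in>\<Omega>. 0 < u x"
    and b: "(b \<longlongrightarrow> 0) F" and ne: "\<forall>\<^sub>F t in F. S t \<noteq> {}"
    and S: "\<forall>\<^sub>F t in F. S t \<subseteq> {x\<in>\<Omega>. u x \<le> b t}"
  shows "((\<lambda>t. Sup ((\<lambda>x. infdist x (frontier \<Omega>)) ` S t)) \<longlongrightarrow> 0) F"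
proof (rule tendstoI)
  fix e :: real assume e: "0 < e"
  obtain m where m: "0 < m" "\<forall>z\<in>\<Omega>. u z < m \<longrightarrow> infdist z (frontier \<Omega>) < e / 2"
    using small_values_near_frontier[OF \<Omega> u pos, of "e / 2"] e by auto
  have "\<forall>\<^sub>F t in F. b t < m" using order_tendstoD(2)[OF b m(1)] .
  with ne S show "\<forall>\<^sub>F t in F. dist (Sup ((\<lambda>x. infdist x (frontier \<Omega>)) ` S t)) 0 < e"
  proof eventually_elim
    case (elim t)
    have small: "\<forall>x\<in>S t. infdist x (frontier \<Omega>) < e / 2"
    proof
      fix x assume "x \<in> S t"
      hence "x \<in> \<Omega>" "u x < m" using elim(2,3) by force+
      thus "infdist x (frontier \<Omega>) < e / 2" using m(2) by blast
    qed
    let ?I = "(\<lambda>x. infdist x (frontier \<Omega>)) ` S t"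
    obtain x where x: "x \<in> S t" using elim(1) by auto
    have "bdd_above ?I" using small by (intro bdd_aboveI[of _ "e / 2"]) auto
    hence "0 \<le> Sup ?I" using x infdist_nonneg by (meson cSup_upper imageI order_trans)
    moreover have "Sup ?I \<le> e / 2" using small x by (intro cSup_least) auto
    ultimately show ?case using e by (simp add: dist_real_def)
  qed
qed

lemma continuous_cst_fun_rep_lower_bound:
  fixes u v :: "real \<times> 'a::euclidean_space \<Rightarrow> real"
  assumes E: "cst_family E" and t: "0 < t" and R: "0 < R"
    and lip: "lipschitz_on L UNIV u" and supp: "\<forall>x. u x \<noteq> 0 \<longrightarrow> norm x < R"
    and v: "continuous_on UNIV v" and ae: "AE x in lebesgue. v x = cst_fun E t u x"
  shows "u x - L * R * t \<le> v x"
proof -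
  have "0 \<le> L" using lip by (simp add: lipschitz_on_def)
  hence "u x - L * R * t \<le> u x - L * R * (1 - exp (- t))"
    using exp_ge_add_one_self[of "- t"] R by (simp add: mult_left_mono)
  also have "\<dots> \<le> v x"
  proof (rule continuous_ge_on_open_if_AE_eq[OF open_UNIV v _ ae])
    show "continuous_on UNIV (\<lambda>y. u y - L * R * (1 - exp (- t)))"
      by (intro continuous_intros lipschitz_on_continuous_on[OF lip])
  qed (use cst_fun_lower_bound[OF E t R lip supp] in auto)
  finally show ?thesis .
qed

lemma positive_sublevels_subset:
  fixes u v :: "'b \<Rightarrow> real"
  assumes ext: "\<forall>x. x \<notin> \<Omega> \<longrightarrow> u x = 0" and v: "\<forall>x. u x - c \<le> v x" and c: "0 \<le> c"
  shows "{x. 0 < u x \<and> u x \<le> a} \<union> (\<Omega> \<inter> {x. 0 < v x \<and> v x \<le> a}) \<subseteq> {x\<in>\<Omega>. u x \<le> a + c}"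
proof
  fix x assume "x \<in> {x. 0 < u x \<and> u x \<le> a} \<union> (\<Omega> \<inter> {x. 0 < v x \<and> v x \<le> a})"
  then consider "0 < u x" "u x \<le> a" | "x \<in> \<Omega>" "v x \<le> a" by auto
  thus "x \<in> {x\<in>\<Omega>. u x \<le> a + c}"
  proof cases
    case 1
    hence "x \<in> \<Omega>" using ext by (metis less_irrefl)
    thus ?thesis using 1 c by simp
  next
    case 2
    thus ?thesis using v[rule_format, of x] by simp
  qed
qed

lemma zero_extension_small_positive_value:
  fixes u :: "'b::euclidean_space \<Rightarrow> real"
  assumes lip: "lipschitz_on L UNIV u" and \<Omega>: "open \<Omega>" "bounded \<Omega>" "\<Omega> \<noteq> {}"
    and ext: "\<forall>x. x \<notin> \<Omega> \<longrightarrow> u x = 0" and pos: "\<forall>x\<in>\<Omega>. 0 < u x" and \<eta>: "0 < \<eta>"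
  obtains y where "0 < u y" "u y \<le> L * \<eta>"
proof -
  obtain p where p: "p \<in> frontier \<Omega>"
    using frontier_not_empty \<Omega>(2,3) not_bounded_UNIV by blast
  hence "p \<in> closure \<Omega>" "p \<notin> \<Omega>" using \<Omega>(1) by (simp_all add: frontier_def interior_open)
  then obtain y where y: "y \<in> \<Omega>" "dist y p < \<eta>"
    using \<eta> unfolding closure_approachable by blast
  have L: "dist (u y) (u p) \<le> L * dist y p" "0 \<le> L"
    using lip unfolding lipschitz_on_def by auto
  have "u p = 0" using ext \<open>p \<notin> \<Omega>\<close> by blast
  hence "u y \<le> L * dist y p" using L(1) by (simp add: dist_real_def)
  also have "\<dots> \<le> L * \<eta>" using y(2) L(2) by (intro mult_left_mono) auto
  finally show ?thesis using that pos y(1) by blast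
qed

theorem lemma4:
  fixes f :: "real \<Rightarrow> real \<Rightarrow> real"
    and g lam :: "real \<Rightarrow> real"
    and \<Omega> :: "(real \<times> 'a::euclidean_space) set"
    and u :: "real \<times> 'a \<Rightarrow> real"
    and Gu :: "real \<times> 'a \<Rightarrow> real \<times> 'a"
    and L R :: real
    and E :: "real \<Rightarrow> real set \<Rightarrow> real set"
    and ut :: "real \<Rightarrow> real \<times> 'a \<Rightarrow> real"
  assumes f_meas: "set_borel_measurable borel ({0..} \<times> {0..}) (\<lambda>(r, v). f r v)"
    and f_bdd: "\<exists>C. \<forall>r\<ge>0. \<forall>v\<ge>0. \<bar>f r v\<bar> \<le> C"
    and f_cont: "\<forall>v\<ge>0. \<forall>\<epsilon>>0. \<exists>\<delta>>0. \<forall>r\<ge>0. \<forall>w\<ge>0. \<bar>w - v\<bar> < \<delta> \<longrightarrow> \<bar>f r w - f r v\<bar> < \<epsilon>"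
    and f_mono: "\<forall>v\<ge>0. \<forall>r1 r2. 0 \<le> r1 \<and> r1 \<le> r2 \<longrightarrow> f r2 v \<le> f r1 v"
    and g_cont: "continuous_on {0..} g"
    and g_diff: "\<forall>s>0. g differentiable (at s)"
    and g_C1: "continuous_on {0<..} (deriv g)"
    and g0: "g 0 = 0"
    and g_pos: "\<forall>s>0. deriv g s > 0"
    and lam_cont: "continuous_on {0..} lam"
    and lam_pos: "\<forall>r\<ge>0. lam r > 0"
    and lam_mono: "mono_on {0..} lam"
    and dom: "open \<Omega>" "connected \<Omega>" "bounded \<Omega>" "\<Omega> \<noteq> {}"
    and u_grad: "\<forall>x\<in>\<Omega>. (u has_derivative (\<lambda>h. Gu x \<bullet> h)) (at x)"
    and u_C1: "continuous_on \<Omega> Gu"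
    and u_cont: "continuous_on (closure \<Omega>) u"
    and u_weak: "weak_solution \<Omega> g f u Gu"
    and u_pos: "\<forall>x\<in>\<Omega>. u x > 0"
    and u_ext: "\<forall>x. x \<notin> \<Omega> \<longrightarrow> u x = 0"
    and u_bdry: "\<forall>\<epsilon>>0. \<exists>U. open U \<and> frontier \<Omega> \<subseteq> U \<and>
                   (\<forall>x\<in>U \<inter> \<Omega>. \<bar>norm (Gu x) - lam (norm x)\<bar> < \<epsilon>)"
    and L_lip: "lipschitz_on L UNIV u"
    and L_min: "\<forall>K. lipschitz_on K UNIV u \<longrightarrow> L \<le> K"
    and R: "R > 0" "closure \<Omega> \<subseteq> ball 0 R"
    and E: "cst_family E"
    and ut: "\<forall>t>0. continuous_on UNIV (ut t) \<and>
               (AE x in lebesgue. ut t x = cst_fun E t u x)"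
  shows "((\<lambda>t. Sup ((\<lambda>x. infdist x (frontier \<Omega>)) `
             ({x. 0 < u x \<and> u x \<le> 2 * R * L * t} \<union>
              (\<Omega> \<inter> {x. 0 < ut t x \<and> ut t x \<le> 2 * R * L * t}))))
          \<longlongrightarrow> 0) (at_right 0)"
proof -
  have supp: "\<forall>x. u x \<noteq> 0 \<longrightarrow> norm x < R" using u_ext R(2) closure_subset by fastforce
  have L: "0 \<le> L" using L_lip by (simp add: lipschitz_on_def)
  define S where "S t = {x. 0 < u x \<and> u x \<le> 2 * R * L * t} \<union>
              (\<Omega> \<inter> {x. 0 < ut t x \<and> ut t x \<le> 2 * R * L * t})" for t
  have S_sub: "S t \<subseteq> {x\<in>\<Omega>. u x \<le> 2 * R * L * t + L * R * t}" if t: "0 < t" for t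
    unfolding S_def using t ut R(1) L
    by (intro positive_sublevels_subset u_ext allI continuous_cst_fun_rep_lower_bound[OF E t R(1) L_lip supp])
      auto
  have S_ne: "S t \<noteq> {}" if t: "0 < t" for t
  proof -
    have "0 < 2 * R * t" using t R(1) by simp
    then obtain y where "0 < u y" "u y \<le> L * (2 * R * t)"
      by (rule zero_extension_small_positive_value[OF L_lip dom(1,3,4) u_ext u_pos])
    hence "y \<in> S t" by (simp add: S_def algebra_simps)
    thus ?thesis by blast
  qed
  have pos: "\<forall>\<^sub>F t in at_right (0::real). 0 < t" by (rule eventually_at_right_less)
  show ?thesis unfolding S_def[symmetric]
  proof (rule Sup_infdist_frontier_tendsto_0[OF dom(3) u_cont u_pos,
        where b = "\<lambda>t. 2 * R * L * t + L * R * t"])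
    show "((\<lambda>t. 2 * R * L * t + L * R * t) \<longlongrightarrow> 0) (at_right 0)"
      by (auto intro!: tendsto_eq_intros)
    show "\<forall>\<^sub>F t in at_right 0. S t \<noteq> {}"
      using pos by (rule eventually_mono) (rule S_ne)
    show "\<forall>\<^sub>F t in at_right 0. S t \<subseteq> {x\<in>\<Omega>. u x \<le> 2 * R * L * t + L * R * t}"
      using pos by (rule eventually_mono) (rule S_sub)
  qed
qed

end
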